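(* Let $G$ act on a countable set $X$, $R\subseteq G$ a subgroup, and $(b,c)$ a connected graph over $X$ such that $H=H_{b,c}$ is $R$-invariant. Then for all $x,y\in X$ there exists $C_{x,y}>0$ such that $T_gf(x)\ge C_{x,y}\,T_gf(y)$ for every $f\in\mathcal{S}^+$ and every $g\in R$.
   Context: A graph over $X$ is $(b,c)$ with $b:X\times X\to[0,\infty)$, $c:X\to\mathbb{R}$, $\sum_yb(x,y)<\infty$ ($b$ need not be symmetric); connected: any $x,z$ are joined by a finite sequence $y_1,\dots,y_n$ with $b(y_i,y_{i+1})>0$. $H_{b,c}f(x)=\sum_yb(x,y)(f(x)-f(y))+c(x)f(x)$ on $\mathrm{Dom}(H)=\{f:\sum_yb(x,y)|f(y)|<\infty\ \forall x\}$. $\mathcal{S}^+$ is the set of nonnegative, not identically zero $f\in\mathrm{Dom}(H)$ with $Hf\ge0$. $T_gf(x)=f(g^{-1}x)$; $H$ is $R$-invariant if $T_g$ preserves $\mathrm{Dom}(H)$ and $HT_g=T_gH$ for $g\in R$. *)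

theory Defs
  imports "HOL-Analysis.Analysis" "HOL-Algebra.Group_Action"
begin

text \<open>A graph (b,c) over the vertex type 'x (the whole type plays the role of X).\<close>
definition is_graph :: "('x \<Rightarrow> 'x \<Rightarrow> real) \<Rightarrow> ('x \<Rightarrow> real) \<Rightarrow> bool" where
  "is_graph b c \<longleftrightarrow> (\<forall>x y. b x y \<ge> 0) \<and> (\<forall>x. (\<lambda>y. b x y) summable_on UNIV)"

definition graph_connected :: "('x \<Rightarrow> 'x \<Rightarrow> real) \<Rightarrow> bool" where
  "graph_connected b \<longleftrightarrow> (\<forall>x z. (\<lambda>u v. b u v > 0)\<^sup>*\<^sup>* x z)"

definition dom_H :: "('x \<Rightarrow> 'x \<Rightarrow> real) \<Rightarrow> ('x \<Rightarrow> real) set" where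
  "dom_H b = {f. \<forall>x. (\<lambda>y. b x y * \<bar>f y\<bar>) summable_on UNIV}"

definition H_op :: "('x \<Rightarrow> 'x \<Rightarrow> real) \<Rightarrow> ('x \<Rightarrow> real) \<Rightarrow> ('x \<Rightarrow> real) \<Rightarrow> 'x \<Rightarrow> real" where
  "H_op b c f x = (\<Sum>\<^sub>\<infinity>y. b x y * (f x - f y)) + c x * f x"

definition S_plus :: "('x \<Rightarrow> 'x \<Rightarrow> real) \<Rightarrow> ('x \<Rightarrow> real) \<Rightarrow> ('x \<Rightarrow> real) set" where
  "S_plus b c = {f. f \<in> dom_H b \<and> (\<forall>x. f x \<ge> 0) \<and> (\<exists>x. f x \<noteq> 0) \<and> (\<forall>x. H_op b c f x \<ge> 0)}"

definition T_act :: "('g, 'm) monoid_scheme \<Rightarrow> ('g \<Rightarrow> 'x \<Rightarrow> 'x) \<Rightarrow> 'g \<Rightarrow> ('x \<Rightarrow> real) \<Rightarrow> 'x \<Rightarrow> real" where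
  "T_act G \<phi> g f x = f (\<phi> (inv\<^bsub>G\<^esub> g) x)"

definition R_invariant :: "('g, 'm) monoid_scheme \<Rightarrow> ('g \<Rightarrow> 'x \<Rightarrow> 'x) \<Rightarrow> 'g set
    \<Rightarrow> ('x \<Rightarrow> 'x \<Rightarrow> real) \<Rightarrow> ('x \<Rightarrow> real) \<Rightarrow> bool" where
  "R_invariant G \<phi> R b c \<longleftrightarrow> (\<forall>g\<in>R. \<forall>f\<in>dom_H b.
      T_act G \<phi> g f \<in> dom_H b \<and> H_op b c (T_act G \<phi> g f) = T_act G \<phi> g (H_op b c f))"

end

theory Submission
  imports Defs
begin

text \<open>Evaluating \<open>H f \<ge> 0\<close> at \<open>x\<close> gives \<open>(deg x + c x) f x \<ge> \<Sum>\<^sub>z b x z f z \<ge> b x y f y\<close>,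
  a one-step Harnack inequality along every edge \<open>b x y > 0\<close>. Chaining it along a path from
  \<open>x\<close> to \<open>y\<close> yields a constant that depends only on \<open>(b, c)\<close> and the path. Since \<open>H\<close> commutes
  with \<open>T\<^sub>g\<close> for \<open>g \<in> R\<close>, every \<open>T\<^sub>g f\<close> is again a nonnegative supersolution, so the same
  constant works uniformly in \<open>g\<close>.\<close>

definition nonneg_supersolution :: "('x \<Rightarrow> 'x \<Rightarrow> real) \<Rightarrow> ('x \<Rightarrow> real) \<Rightarrow> ('x \<Rightarrow> real) \<Rightarrow> bool" where
  "nonneg_supersolution b c f \<longleftrightarrow> f \<in> dom_H b \<and> (\<forall>z. 0 \<le> f z) \<and> (\<forall>z. 0 \<le> H_op b c f z)"

lemma S_plus_nonneg_supersolution: "f \<in> S_plus b c \<Longrightarrow> nonneg_supersolution b c f"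
  unfolding S_plus_def nonneg_supersolution_def by blast

lemma dom_H_summable:
  assumes "is_graph b c" and "f \<in> dom_H b"
  shows "(\<lambda>z. b x z * f z) summable_on UNIV"
proof (rule abs_summable_summable)
  show "(\<lambda>z. norm (b x z * f z)) summable_on UNIV"
    using assms unfolding is_graph_def dom_H_def by (simp add: abs_mult)
qed

lemma H_op_expand:
  assumes "is_graph b c" and "f \<in> dom_H b"
  shows "H_op b c f x = (infsum (b x) UNIV + c x) * f x - (\<Sum>\<^sub>\<infinity>z. b x z * f z)"
proof -
  have deg: "b x summable_on UNIV"
    using assms(1) unfolding is_graph_def by blast
  have bf: "(\<lambda>z. b x z * f z) summable_on UNIV"
    using assms by (rule dom_H_summable)
  have "(\<Sum>\<^sub>\<infinity>z. b x z * (f x - f z)) = (\<Sum>\<^sub>\<infinity>z. b x z * f x + - (b x z * f z))"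
    by (simp add: algebra_simps)
  also have "\<dots> = (\<Sum>\<^sub>\<infinity>z. b x z * f x) + (\<Sum>\<^sub>\<infinity>z. - (b x z * f z))"
    using deg bf summable_on_uminus[of "\<lambda>z. b x z * f z"]
    by (intro infsum_add summable_on_cmult_left) auto
  also have "\<dots> = infsum (b x) UNIV * f x - (\<Sum>\<^sub>\<infinity>z. b x z * f z)"
    by (simp add: infsum_cmult_left[OF deg] infsum_uminus)
  finally show ?thesis
    unfolding H_op_def by (simp add: algebra_simps)
qed

lemma nonneg_supersolution_edge_harnack:
  assumes "is_graph b c" and f: "nonneg_supersolution b c f" and edge: "b x y > 0"
  shows "b x y / (\<bar>infsum (b x) UNIV + c x\<bar> + 1) * f y \<le> f x"
proof -
  define a where "a = infsum (b x) UNIV + c x"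
  have fnn: "\<And>z. 0 \<le> f z"
    using f unfolding nonneg_supersolution_def by blast
  have "b x y * f y = (\<Sum>\<^sub>\<infinity>z\<in>{y}. b x z * f z)"
    by simp
  also have "\<dots> \<le> (\<Sum>\<^sub>\<infinity>z. b x z * f z)"
  proof (rule infsum_mono2)
    show "(\<lambda>z. b x z * f z) summable_on UNIV"
      using assms(1) f unfolding nonneg_supersolution_def by (blast intro: dom_H_summable)
  qed (use assms(1) fnn in \<open>auto simp: is_graph_def\<close>)
  also have "\<dots> \<le> a * f x"
    using f H_op_expand[OF assms(1), of f x]
    unfolding nonneg_supersolution_def a_def by (smt (verit))
  finally have key: "b x y * f y \<le> a * f x" .
  show ?thesis
  proof (cases "a > 0")
    case True
    have "b x y / (\<bar>a\<bar> + 1) * f y \<le> b x y / a * f y"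
      using True edge fnn by (intro mult_right_mono divide_left_mono) auto
    also have "\<dots> \<le> f x"
      using key True by (simp add: field_simps)
    finally show ?thesis
      by (simp add: a_def)
  next
    case False
    then have "b x y * f y \<le> 0"
      using key fnn[of x] by (smt (verit) mult_nonpos_nonneg)
    then have "f y = 0"
      using edge fnn[of y] by (smt (verit) mult_pos_pos)
    then show ?thesis
      using fnn by simp
  qed
qed

lemma nonneg_supersolution_path_harnack:
  assumes "is_graph b c" and "(\<lambda>u v. b u v > 0)\<^sup>*\<^sup>* x y"
  shows "\<exists>C>0. \<forall>f. nonneg_supersolution b c f \<longrightarrow> C * f y \<le> f x"
  using assms(2)
proof (induction rule: converse_rtranclp_induct)
  case base
  show ?case
    by (intro exI[of _ 1]) auto
next
  case (step x z)
  then obtain C where C: "C > 0" "\<And>f. nonneg_supersolution b c f \<Longrightarrow> C * f y \<le> f z"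
    by blast
  define D where "D = b x z / (\<bar>infsum (b x) UNIV + c x\<bar> + 1)"
  have D: "D > 0"
    using step(1) unfolding D_def by (simp add: add_pos_nonneg)
  have "D * C * f y \<le> f x" if f: "nonneg_supersolution b c f" for f
  proof -
    have "D * C * f y \<le> D * f z"
      using C(2)[OF f] D by (simp add: mult.assoc)
    also have "\<dots> \<le> f x"
      unfolding D_def by (rule nonneg_supersolution_edge_harnack[OF assms(1) f step(1)])
    finally show ?thesis .
  qed
  then show ?case
    using C(1) D by (intro exI[of _ "D * C"]) auto
qed

lemma R_invariant_nonneg_supersolution:
  assumes "R_invariant G \<phi> R b c" and "g \<in> R" and f: "nonneg_supersolution b c f"
  shows "nonneg_supersolution b c (T_act G \<phi> g f)"
proof -
  have "T_act G \<phi> g f \<in> dom_H b" and "H_op b c (T_act G \<phi> g f) = T_act G \<phi> g (H_op b c f)"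
    using assms f unfolding R_invariant_def nonneg_supersolution_def by blast+
  then show ?thesis
    using f unfolding nonneg_supersolution_def T_act_def by auto
qed

theorem lemma2:
  fixes G :: "('g, 'm) monoid_scheme" and \<phi> :: "'g \<Rightarrow> 'x \<Rightarrow> 'x"
    and R :: "'g set" and b :: "'x \<Rightarrow> 'x \<Rightarrow> real" and c :: "'x \<Rightarrow> real"
  assumes "group_action G (UNIV :: 'x set) \<phi>"
    and "countable (UNIV :: 'x set)"
    and "subgroup R G"
    and "is_graph b c"
    and "graph_connected b"
    and "R_invariant G \<phi> R b c"
  shows "\<forall>x y. \<exists>C>0. \<forall>f\<in>S_plus b c. \<forall>g\<in>R.
           T_act G \<phi> g f x \<ge> C * T_act G \<phi> g f y"
proof (intro allI)
  fix x y
  obtain C where "C > 0" and harnack: "\<And>f. nonneg_supersolution b c f \<Longrightarrow> C * f y \<le> f x"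
    using nonneg_supersolution_path_harnack[OF assms(4)] assms(5)
    unfolding graph_connected_def by blast
  have "C * T_act G \<phi> g f y \<le> T_act G \<phi> g f x" if "f \<in> S_plus b c" and "g \<in> R" for f g
    using harnack R_invariant_nonneg_supersolution[OF assms(6)] S_plus_nonneg_supersolution that
    by blast
  with \<open>C > 0\<close> show "\<exists>C>0. \<forall>f\<in>S_plus b c. \<forall>g\<in>R. T_act G \<phi> g f x \<ge> C * T_act G \<phi> g f y"
    by blast
qed

end
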